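(* Let $S=\{x\in\mathbb{R}^n\mid h_i^Tx\le b_i,\ i=1,\dots,r\}$, $U_{0,A}=\{A\in\mathbb{R}^{n\times n}\mid\mathrm{Tr}(V_j^TA)\le v_j,\ j=1,\dots,s\}$, and $U_{0,g}=\{g:\mathbb{R}^n\to\mathbb{R}^n\mid\|g(x)\|_\infty\le\gamma\|x\|_p^d\ \ \forall x\in S\}$, where $p\ge1$ is either $+\infty$ or a rational number, $\gamma>0$, and $d$ is a nonnegative integer. Let $f_\star(x)=A_\star x+g_\star(x)$ with $A_\star\in U_{0,A}$ and $g_\star\in U_{0,g}$. Let $x_1,\dots,x_k\in\mathbb{R}^n$, $y_j=f_\star(x_j)$, and $U_{k,A}=\{A\in U_{0,A}\mid\|Ax_j-y_j\|_\infty\le\gamma\|x_j\|_p^d,\ j=1,\dots,k\}$. Let $c\in\mathbb{R}^n$. Then the problem $$\min_x\ c^Tx\quad\text{s.t. } x\in S,\quad f(x)\in S\ \ \text{for all } f\in\{x\mapsto Ax+g(x)\mid A\in U_{k,A},\ g\in U_{0,g}\}$$ can be reformulated as a second-order cone program.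
   Context: Setting: an unknown nonlinear system $x_{t+1}=f_\star(x_t)$ consisting of an unknown linear part and an unknown nonlinear part of bounded growth on $S$; $(x_j,y_j)$ are observed one-step transitions. *)

theory Defs
  imports "HOL-Analysis.Analysis"
begin

definition linf :: "real^'n \<Rightarrow> real" where
  "linf x = Max (range (\<lambda>i. \<bar>x$i\<bar>))"

definition pnorm :: "ereal \<Rightarrow> real^'n \<Rightarrow> real" where
  "pnorm p x = (if p = \<infinity> then linf x
     else (\<Sum>i\<in>UNIV. \<bar>x$i\<bar> powr real_of_ereal p) powr (1 / real_of_ereal p))"

definition polyS :: "nat \<Rightarrow> (nat \<Rightarrow> real^'n) \<Rightarrow> (nat \<Rightarrow> real) \<Rightarrow> (real^'n) set" where
  "polyS r h b = {x. \<forall>i<r. h i \<bullet> x \<le> b i}"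

definition U0A :: "nat \<Rightarrow> (nat \<Rightarrow> real^'n^'n) \<Rightarrow> (nat \<Rightarrow> real) \<Rightarrow> (real^'n^'n) set" where
  "U0A s V v = {A. \<forall>j<s. trace (transpose (V j) ** A) \<le> v j}"

definition U0g :: "(real^'n) set \<Rightarrow> real \<Rightarrow> ereal \<Rightarrow> nat \<Rightarrow> (real^'n \<Rightarrow> real^'n) set" where
  "U0g S \<gamma> p d = {g. \<forall>x\<in>S. linf (g x) \<le> \<gamma> * (pnorm p x) ^ d}"

definition UkA :: "(real^'n^'n) set \<Rightarrow> real \<Rightarrow> ereal \<Rightarrow> nat \<Rightarrow> nat \<Rightarrow> (nat \<Rightarrow> real^'n)
    \<Rightarrow> (nat \<Rightarrow> real^'n) \<Rightarrow> (real^'n^'n) set" where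
  "UkA U \<gamma> p d k xs ys = {A\<in>U. \<forall>j<k. linf (A *v xs j - ys j) \<le> \<gamma> * (pnorm p (xs j)) ^ d}"

definition robust_feasible :: "(real^'n) set \<Rightarrow> (real^'n^'n) set \<Rightarrow> (real^'n \<Rightarrow> real^'n) set
    \<Rightarrow> (real^'n) set" where
  "robust_feasible S UA UG = {x. x \<in> S \<and>
     (\<forall>A g. A \<in> UA \<longrightarrow> g \<in> UG \<longrightarrow> A *v x + g x \<in> S)}"

definition soc_constraint :: "nat \<Rightarrow> nat \<Rightarrow> (nat \<Rightarrow> real^'n) \<Rightarrow> (nat \<Rightarrow> nat \<Rightarrow> real) \<Rightarrow> (nat \<Rightarrow> real)
    \<Rightarrow> real^'n \<Rightarrow> (nat \<Rightarrow> real) \<Rightarrow> real \<Rightarrow> real^'n \<Rightarrow> (nat \<Rightarrow> real) \<Rightarrow> bool" where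
  "soc_constraint m q Mx Mz bb ex ez f x z \<longleftrightarrow>
     sqrt (\<Sum>i<q. (Mx i \<bullet> x + (\<Sum>j<m. Mz i j * z j) + bb i)\<^sup>2)
       \<le> ex \<bullet> x + (\<Sum>j<m. ez j * z j) + f"

text \<open>The problem  min c^T x  s.t. x in F  can be reformulated as a second-order cone program:
  there is an SOCP in variables (x, z) (finitely many SOC constraints; linear equalities and
  inequalities are the special case q = 0) with linear objective cx . x + cz . z such that
  F is exactly the projection of the SOCP feasible set onto x and the SOCP objective
  coincides with c^T x on its feasible set.\<close>
definition socp_reformulable :: "real^'n \<Rightarrow> (real^'n) set \<Rightarrow> bool" where
  "socp_reformulable c F \<longleftrightarrow>
    (\<exists>(m::nat) (L::nat) (q::nat \<Rightarrow> nat) Mx Mz bb ex ez f (cx::real^'n) (cz::nat \<Rightarrow> real).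
       (\<forall>x. x \<in> F \<longleftrightarrow> (\<exists>z. \<forall>l<L. soc_constraint m (q l) (Mx l) (Mz l) (bb l) (ex l) (ez l) (f l) x z))
     \<and> (\<forall>x z. (\<forall>l<L. soc_constraint m (q l) (Mx l) (Mz l) (bb l) (ex l) (ez l) (f l) x z)
              \<longrightarrow> cx \<bullet> x + (\<Sum>j<m. cz j * z j) = c \<bullet> x))"

end

(*
  For x in S the disturbance g(x) ranges over the whole sup-norm ball of radius
  \<gamma> \<parallel>x\<parallel>_p^d, so the worst case of h_i^T g(x) is \<gamma> \<parallel>h_i\<parallel>_1 \<parallel>x\<parallel>_p^d (take
  g(x) = \<gamma> \<parallel>x\<parallel>_p^d sgn h_i). Hence x is robustly feasible iff x \<in> S and, for some
  t \<ge> \<parallel>x\<parallel>_p^d, h_i^T A x \<le> b_i - \<gamma> \<parallel>h_i\<parallel>_1 t for all A \<in> U_{k,A}. As U_{k,A} is a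
  polyhedron in A, the affine Farkas lemma turns each of these robust constraints into the
  existence of nonnegative multipliers satisfying linear equations in (x, t); the constraint is
  vacuous if U_{k,A} is empty. For rational p = a/b, \<parallel>x\<parallel>_p \<le> u is the projection of the
  power-cone system |x_i| \<le> t_i, t_i^a \<le> \<rho>_i^b u^(a-b), \<Sum> \<rho>_i \<le> u, and a power inequality
  of this kind bounds a geometric mean of 2^K numbers, i.e. it is a binary tower of rotated
  cones y^2 \<le> v w. Second-order-cone representability is closed under finite conjunctions and
  under projection, which assembles all of this into one second-order cone program.
*)

theory Submission
  imports Defs
begin

section \<open>Second-order-cone representable predicates\<close>

text \<open>A form that is affine in \<open>x\<close> and in finitely many of the variables \<open>z\<close>; asking for the
  representation for all large \<open>m\<close> lets finitely many forms share one number of variables.\<close>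

definition affine_form :: "('a::real_inner \<Rightarrow> (nat \<Rightarrow> real) \<Rightarrow> real) \<Rightarrow> bool" where
  "affine_form \<phi> \<longleftrightarrow>
     (\<forall>\<^sub>F m in sequentially. \<exists>e ez f. \<forall>x z. \<phi> x z = e \<bullet> x + (\<Sum>j<m. ez j * z j) + f)"

lemma affine_formE:
  assumes "affine_form \<phi>"
  obtains e ez m f where "\<And>x z. \<phi> x z = e \<bullet> x + (\<Sum>j<m. ez j * z j) + f"
  using assms unfolding affine_form_def eventually_sequentially by (meson order_refl)

lemma affine_form_const: "affine_form (\<lambda>x z. c)"
  unfolding affine_form_def
  by (intro always_eventually allI exI[of _ 0] exI[of _ "\<lambda>_. 0"] exI[of _ c]) simp

lemma affine_form_inner: "affine_form (\<lambda>x z. v \<bullet> x)"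
  unfolding affine_form_def
  by (intro always_eventually allI exI[of _ v] exI[of _ "\<lambda>_. 0"] exI[of _ 0]) simp

lemma affine_form_component: "affine_form (\<lambda>(x::real^'n) z. x $ i)"
  using affine_form_inner[of "axis i (1::real)"] by (simp add: inner_axis')

lemma affine_form_var: "affine_form (\<lambda>x z. z j)"
  unfolding affine_form_def using eventually_gt_at_top[of j]
proof eventually_elim
  case (elim m)
  then have "(\<Sum>i<m. (if i = j then 1 else 0) * z i) = z j" for z :: "nat \<Rightarrow> real"
    by (simp add: of_bool_def[symmetric])
  then show ?case by (intro exI[of _ 0] exI[of _ "\<lambda>i. if i = j then 1 else 0"] exI[of _ 0]) simp
qed

lemma affine_form_add:
  assumes "affine_form \<phi>" "affine_form \<psi>"
  shows "affine_form (\<lambda>x z. \<phi> x z + \<psi> x z)"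
  using assms unfolding affine_form_def
proof eventually_elim
  case (elim m)
  then obtain e1 ez1 f1 e2 ez2 f2
    where "\<And>x z. \<phi> x z = e1 \<bullet> x + (\<Sum>j<m. ez1 j * z j) + f1"
      and "\<And>x z. \<psi> x z = e2 \<bullet> x + (\<Sum>j<m. ez2 j * z j) + f2"
    by blast
  then show ?case
    by (intro exI[of _ "e1 + e2"] exI[of _ "\<lambda>j. ez1 j + ez2 j"] exI[of _ "f1 + f2"])
      (simp add: inner_add_left distrib_right sum.distrib)
qed

lemma affine_form_scale:
  assumes "affine_form \<phi>"
  shows "affine_form (\<lambda>x z. c * \<phi> x z)"
  using assms unfolding affine_form_def
proof eventually_elim
  case (elim m)
  then obtain e ez f where "\<And>x z. \<phi> x z = e \<bullet> x + (\<Sum>j<m. ez j * z j) + f"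
    by blast
  then show ?case
    by (intro exI[of _ "c *\<^sub>R e"] exI[of _ "\<lambda>j. c * ez j"] exI[of _ "c * f"])
      (simp add: distrib_left sum_distrib_left mult.assoc)
qed

lemma affine_form_scale_right:
  assumes "affine_form \<phi>"
  shows "affine_form (\<lambda>x z. \<phi> x z * c)"
  using affine_form_scale[OF assms, of c] by (simp add: mult.commute)

lemma affine_form_uminus:
  assumes "affine_form \<phi>"
  shows "affine_form (\<lambda>x z. - \<phi> x z)"
  using affine_form_scale[OF assms, of "-1"] by simp

lemma affine_form_diff:
  assumes "affine_form \<phi>" "affine_form \<psi>"
  shows "affine_form (\<lambda>x z. \<phi> x z - \<psi> x z)"
  using affine_form_add[OF assms(1) affine_form_uminus[OF assms(2)]] by simp

lemma affine_form_sum: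
  assumes "finite I" "\<And>i. i \<in> I \<Longrightarrow> affine_form (\<phi> i)"
  shows "affine_form (\<lambda>x z. \<Sum>i\<in>I. \<phi> i x z)"
  using assms by (induction I rule: finite_induct) (auto intro: affine_form_const affine_form_add)

lemma affine_form_subst:
  assumes "affine_form \<phi>" "\<And>j. affine_form (\<psi> j)"
  shows "affine_form (\<lambda>x z. \<phi> x (\<lambda>j. \<psi> j x z))"
proof -
  obtain e ez m f where \<phi>: "\<And>x z. \<phi> x z = e \<bullet> x + (\<Sum>j<m. ez j * z j) + f"
    using affine_formE[OF assms(1)] by blast
  have "affine_form (\<lambda>x z. e \<bullet> x + (\<Sum>j<m. ez j * \<psi> j x z) + f)"
    using assms(2)
    by (intro affine_form_add affine_form_sum affine_form_scale affine_form_inner affine_form_const)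
      auto
  then show ?thesis by (simp add: \<phi>)
qed

lemmas affine_form_intros = affine_form_const affine_form_var affine_form_inner
  affine_form_component affine_form_add affine_form_diff affine_form_uminus affine_form_scale
  affine_form_scale_right affine_form_sum

definition soc_pred :: "('a::real_inner \<Rightarrow> (nat \<Rightarrow> real) \<Rightarrow> bool) \<Rightarrow> bool" where
  "soc_pred C \<longleftrightarrow> (\<exists>(q::nat) u t. (\<forall>i<q. affine_form (u i)) \<and> affine_form t \<and>
     C = (\<lambda>x z. sqrt (\<Sum>i<q. (u i x z)\<^sup>2) \<le> t x z))"

lemma soc_pred_subst:
  assumes "soc_pred C" "\<And>j. affine_form (\<psi> j)"
  shows "soc_pred (\<lambda>x z. C x (\<lambda>j. \<psi> j x z))"
proof -
  obtain q :: nat and u t where "\<forall>i<q. affine_form (u i)" "affine_form t"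
    and C: "C = (\<lambda>x z. sqrt (\<Sum>i<q. (u i x z)\<^sup>2) \<le> t x z)"
    using assms(1) unfolding soc_pred_def by blast
  then show ?thesis
    unfolding soc_pred_def
    by (intro exI[of _ q] exI[of _ "\<lambda>i x z. u i x (\<lambda>j. \<psi> j x z)"]
        exI[of _ "\<lambda>x z. t x (\<lambda>j. \<psi> j x z)"])
      (simp add: affine_form_subst assms(2))
qed

definition interleave :: "(nat \<Rightarrow> 'b) \<Rightarrow> (nat \<Rightarrow> 'b) \<Rightarrow> nat \<Rightarrow> 'b" where
  "interleave w z k = (if even k then w (k div 2) else z (k div 2))"

definition evens :: "(nat \<Rightarrow> 'b) \<Rightarrow> nat \<Rightarrow> 'b" where
  "evens w = (\<lambda>i. w (2 * i))"

definition odds :: "(nat \<Rightarrow> 'b) \<Rightarrow> nat \<Rightarrow> 'b" where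
  "odds w = (\<lambda>i. w (2 * i + 1))"

lemma evens_interleave [simp]: "evens (interleave w z) = w"
  by (simp add: evens_def interleave_def)

lemma odds_interleave [simp]: "odds (interleave w z) = z"
  by (simp add: odds_def interleave_def)

lemma ex_evens_odds_iff: "(\<exists>z. R (evens z) (odds z)) \<longleftrightarrow> (\<exists>u v. R u v)"
  by (metis evens_interleave odds_interleave)

lemma affine_form_interleave:
  assumes "\<And>k. affine_form (\<alpha> k)" "\<And>k. affine_form (\<beta> k)"
  shows "affine_form (\<lambda>x z. interleave (\<lambda>k. \<alpha> k x z) (\<lambda>k. \<beta> k x z) j)"
  using assms by (cases "even j") (simp_all add: interleave_def)

lemma soc_pred_interleave:
  assumes "soc_pred C" "\<And>k. affine_form (\<alpha> k)" "\<And>k. affine_form (\<beta> k)"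
  shows "soc_pred (\<lambda>x z. C x (interleave (\<lambda>k. \<alpha> k x z) (\<lambda>k. \<beta> k x z)))"
  using soc_pred_subst[OF assms(1) affine_form_interleave[OF assms(2,3)]] by (simp add: eta_contract_eq)

text \<open>\<open>P x w\<close> holds iff some auxiliary variables \<open>z\<close> satisfy finitely many cone constraints at
  \<open>(x, interleave w z)\<close>: the visible variables \<open>w\<close> sit at the even places, so the auxiliary
  variables of different subproblems can be kept apart by interleaving them again.\<close>

definition soc_repr :: "('a::real_inner \<Rightarrow> (nat \<Rightarrow> real) \<Rightarrow> bool) \<Rightarrow> bool" where
  "soc_repr P \<longleftrightarrow> (\<exists>Cs. (\<forall>C\<in>set Cs. soc_pred C) \<and>
     (\<forall>x w. P x w \<longleftrightarrow> (\<exists>z. \<forall>C\<in>set Cs. C x (interleave w z))))"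

lemma soc_repr_cong:
  assumes "soc_repr P" "\<And>x w. P x w \<longleftrightarrow> Q x w"
  shows "soc_repr Q"
proof -
  have "P = Q" using assms(2) by (intro ext) auto
  with assms(1) show ?thesis by simp
qed

lemma soc_repr_True: "soc_repr (\<lambda>x w. True)"
  unfolding soc_repr_def by (intro exI[of _ "[]"]) simp

lemma soc_repr_soc_pred:
  assumes "soc_pred C"
  shows "soc_repr C"
proof -
  have "soc_pred (\<lambda>x z. C x (evens z))"
    unfolding evens_def by (rule soc_pred_subst[OF assms affine_form_var])
  then show ?thesis
    unfolding soc_repr_def by (intro exI[of _ "[\<lambda>x z. C x (evens z)]"]) simp
qed

lemma soc_repr_conj:
  assumes "soc_repr P" "soc_repr Q"
  shows "soc_repr (\<lambda>x w. P x w \<and> Q x w)"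
proof -
  obtain Cs where Cs: "\<forall>C\<in>set Cs. soc_pred C"
    and P: "\<And>x w. P x w \<longleftrightarrow> (\<exists>z. \<forall>C\<in>set Cs. C x (interleave w z))"
    using assms(1) unfolding soc_repr_def by blast
  obtain Ds where Ds: "\<forall>D\<in>set Ds. soc_pred D"
    and Q: "\<And>x w. Q x w \<longleftrightarrow> (\<exists>z. \<forall>D\<in>set Ds. D x (interleave w z))"
    using assms(2) unfolding soc_repr_def by blast
  \<comment> \<open>the auxiliary variables of \<open>P\<close> go to the even, those of \<open>Q\<close> to the odd places of \<open>z\<close>\<close>
  define left where "left C = (\<lambda>x z. C x (interleave (evens z) (evens (odds z))))"
    for C :: "'a \<Rightarrow> (nat \<Rightarrow> real) \<Rightarrow> bool"
  define right where "right C = (\<lambda>x z. C x (interleave (evens z) (odds (odds z))))"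
    for C :: "'a \<Rightarrow> (nat \<Rightarrow> real) \<Rightarrow> bool"
  have "soc_pred (left C)" if "soc_pred C" for C
    unfolding left_def evens_def odds_def by (intro soc_pred_interleave that affine_form_var)
  moreover have "soc_pred (right C)" if "soc_pred C" for C
    unfolding right_def evens_def odds_def by (intro soc_pred_interleave that affine_form_var)
  moreover have "P x w \<and> Q x w \<longleftrightarrow> (\<exists>z. \<forall>C\<in>set (map left Cs @ map right Ds). C x (interleave w z))"
    for x w
  proof -
    have lr: "left C x (interleave w z) = C x (interleave w (evens z))"
      "right C x (interleave w z) = C x (interleave w (odds z))" for C z
      by (simp_all add: left_def right_def)
    have "(\<exists>z. \<forall>C\<in>set (map left Cs @ map right Ds). C x (interleave w z)) \<longleftrightarrow>
        (\<exists>z. (\<forall>C\<in>set Cs. C x (interleave w (evens z))) \<and> (\<forall>D\<in>set Ds. D x (interleave w (odds z))))"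
      by (simp add: lr ball_Un)
    also have "\<dots> \<longleftrightarrow> (\<exists>u v. (\<forall>C\<in>set Cs. C x (interleave w u)) \<and> (\<forall>D\<in>set Ds. D x (interleave w v)))"
      by (rule ex_evens_odds_iff)
    also have "\<dots> \<longleftrightarrow> P x w \<and> Q x w"
      by (simp add: P Q)
    finally show ?thesis by (rule sym)
  qed
  ultimately show ?thesis
    unfolding soc_repr_def using Cs Ds by (intro exI[of _ "map left Cs @ map right Ds"]) auto
qed

lemma soc_repr_Ball:
  assumes "finite I" "\<And>i. i \<in> I \<Longrightarrow> soc_repr (P i)"
  shows "soc_repr (\<lambda>x w. \<forall>i\<in>I. P i x w)"
  using assms by (induction I rule: finite_induct) (auto intro: soc_repr_True soc_repr_conj)

lemma soc_repr_All:
  assumes "\<And>i::'i::finite. soc_repr (P i)"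
  shows "soc_repr (\<lambda>x w. \<forall>i. P i x w)"
  using soc_repr_Ball[of UNIV P] assms by simp

lemma soc_repr_exists:
  assumes "soc_repr (\<lambda>x w. Q x (\<lambda>i. w (2 * i)) (\<lambda>i. w (2 * i + 1)))"
  shows "soc_repr (\<lambda>x w. \<exists>u. Q x w u)"
proof -
  obtain Cs where Cs: "\<forall>C\<in>set Cs. soc_pred C"
    and Q: "\<And>x w. Q x (evens w) (odds w) \<longleftrightarrow> (\<exists>z. \<forall>C\<in>set Cs. C x (interleave w z))"
    using assms unfolding soc_repr_def evens_def odds_def by blast
  have Q': "Q x u v \<longleftrightarrow> (\<exists>z. \<forall>C\<in>set Cs. C x (interleave (interleave u v) z))" for x u v
    using Q[of x "interleave u v"] by simp
  define tr where "tr C = (\<lambda>x z. C x (interleave (interleave (evens z) (evens (odds z))) (odds (odds z))))"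
    for C :: "'a \<Rightarrow> (nat \<Rightarrow> real) \<Rightarrow> bool"
  have "soc_pred (tr C)" if "soc_pred C" for C
    unfolding tr_def evens_def odds_def
    by (intro soc_pred_interleave that affine_form_interleave affine_form_var)
  moreover have "(\<exists>u. Q x w u) \<longleftrightarrow> (\<exists>z. \<forall>C\<in>set (map tr Cs). C x (interleave w z))" for x w
  proof -
    have "(\<exists>z. \<forall>C\<in>set (map tr Cs). C x (interleave w z)) \<longleftrightarrow>
        (\<exists>z. \<forall>C\<in>set Cs. C x (interleave (interleave w (evens z)) (odds z)))"
      by (simp add: tr_def)
    also have "\<dots> \<longleftrightarrow> (\<exists>u v. \<forall>C\<in>set Cs. C x (interleave (interleave w u) v))"
      by (rule ex_evens_odds_iff)
    also have "\<dots> \<longleftrightarrow> (\<exists>u. Q x w u)"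
      by (simp add: Q')
    finally show ?thesis by (rule sym)
  qed
  ultimately show ?thesis
    unfolding soc_repr_def using Cs by (intro exI[of _ "map tr Cs"]) auto
qed

lemma soc_repr_exists_countable:
  fixes Q :: "'a::real_inner \<Rightarrow> (nat \<Rightarrow> real) \<Rightarrow> ('i::countable \<Rightarrow> real) \<Rightarrow> bool"
  assumes "soc_repr (\<lambda>x w. Q x (\<lambda>i. w (2 * i)) (\<lambda>i. w (2 * to_nat i + 1)))"
  shows "soc_repr (\<lambda>x w. \<exists>l. Q x w l)"
proof (rule soc_repr_cong[OF soc_repr_exists[of "\<lambda>x w u. Q x w (\<lambda>i. u (to_nat i))", OF assms]])
  show "(\<exists>u. Q x w (\<lambda>i. u (to_nat i))) \<longleftrightarrow> (\<exists>l. Q x w l)" for x w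
  proof
    assume "\<exists>l. Q x w l"
    then obtain l where "Q x w l" ..
    then have "Q x w (\<lambda>i. (l \<circ> from_nat) (to_nat i))" by simp
    then show "\<exists>u. Q x w (\<lambda>i. u (to_nat i))" by blast
  qed blast
qed

lemma soc_repr_exists_real:
  assumes "soc_repr (\<lambda>x w. Q x (\<lambda>i. w (2 * i)) (w 1))"
  shows "soc_repr (\<lambda>x w. \<exists>t::real. Q x w t)"
proof (rule soc_repr_cong[OF soc_repr_exists[of "\<lambda>x w u. Q x w (u 0)"]])
  show "soc_repr (\<lambda>x w. Q x (\<lambda>i. w (2 * i)) (w (2 * 0 + 1)))"
    using assms by simp
  show "(\<exists>u. Q x w (u 0)) \<longleftrightarrow> (\<exists>t. Q x w t)" for x w
  proof
    assume "\<exists>t. Q x w t"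
    then obtain t where "Q x w t" ..
    then show "\<exists>u. Q x w (u 0)" by (intro exI[of _ "\<lambda>_. t"])
  qed blast
qed

lemma soc_repr_nonneg:
  assumes "affine_form \<phi>"
  shows "soc_repr (\<lambda>x w. 0 \<le> \<phi> x w)"
proof (rule soc_repr_soc_pred)
  show "soc_pred (\<lambda>x w. 0 \<le> \<phi> x w)"
    unfolding soc_pred_def using assms
    by (intro exI[of _ 0] exI[of _ "\<lambda>_ _ _. 0"] exI[of _ \<phi>]) simp
qed

lemma soc_repr_le:
  assumes "affine_form \<phi>" "affine_form \<psi>"
  shows "soc_repr (\<lambda>x w. \<phi> x w \<le> \<psi> x w)"
  using soc_repr_nonneg[OF affine_form_diff[OF assms(2,1)]] by simp

lemma soc_repr_eq:
  assumes "affine_form \<phi>" "affine_form \<psi>"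
  shows "soc_repr (\<lambda>x w. \<phi> x w = \<psi> x w)"
  using soc_repr_conj[OF soc_repr_le[OF assms] soc_repr_le[OF assms(2,1)]]
  by (simp add: order_eq_iff)

lemma soc_pred_eventually_soc_constraint:
  fixes C :: "real^'n \<Rightarrow> (nat \<Rightarrow> real) \<Rightarrow> bool"
  assumes "soc_pred C"
  shows "\<forall>\<^sub>F m in sequentially. \<exists>q Mx Mz bb ex ez f. C = soc_constraint m q Mx Mz bb ex ez f"
proof -
  obtain q :: nat and u t where u: "\<forall>i<q. affine_form (u i)" and t: "affine_form t"
    and C: "C = (\<lambda>x z. sqrt (\<Sum>i<q. (u i x z)\<^sup>2) \<le> t x z)"
    using assms unfolding soc_pred_def by blast
  have "\<forall>\<^sub>F m in sequentially. \<forall>i\<in>{..<q}. \<exists>e ez f. \<forall>x z. u i x z = e \<bullet> x + (\<Sum>j<m. ez j * z j) + f"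
    using u unfolding affine_form_def by (intro eventually_ball_finite) auto
  with t show ?thesis
    unfolding affine_form_def
  proof eventually_elim
    case (elim m)
    then have "\<forall>i. i < q \<longrightarrow> (\<exists>e ez f. \<forall>x z. u i x z = e \<bullet> x + (\<Sum>j<m. ez j * z j) + f)"
      by simp
    then obtain Mx Mz bb where "\<forall>i<q. \<forall>x z. u i x z = Mx i \<bullet> x + (\<Sum>j<m. Mz i j * z j) + bb i"
      unfolding choice_iff' by blast
    moreover obtain ex ez f where "\<forall>x z. t x z = ex \<bullet> x + (\<Sum>j<m. ez j * z j) + f"
      using elim by blast
    ultimately show ?case
      unfolding C soc_constraint_def
      by (intro exI[of _ q] exI[of _ Mx] exI[of _ Mz] exI[of _ bb] exI[of _ ex] exI[of _ ez] exI[of _ f])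
        (simp add: fun_eq_iff)
  qed
qed

lemma socp_reformulable_if_soc_repr:
  assumes "soc_repr (\<lambda>x w. x \<in> F)"
  shows "socp_reformulable c F"
proof -
  obtain Cs where Cs: "\<forall>C\<in>set Cs. soc_pred C"
    and F: "\<And>x. x \<in> F \<longleftrightarrow> (\<exists>z. \<forall>C\<in>set Cs. C x (interleave (\<lambda>_. 0) z))"
    using assms unfolding soc_repr_def by blast
  define L where "L = length Cs"
  define D where "D l = (\<lambda>x z. (Cs ! l) x (interleave (\<lambda>_. 0) z))" for l
  have "soc_pred (D l)" if "l < L" for l
    using Cs that unfolding D_def L_def
    by (intro soc_pred_interleave affine_form_const affine_form_var) simp
  then have "\<forall>\<^sub>F m in sequentially. \<forall>l\<in>{..<L}. \<exists>q Mx Mz bb ex ez f. D l = soc_constraint m q Mx Mz bb ex ez f"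
    by (intro eventually_ball_finite ballI soc_pred_eventually_soc_constraint) auto
  then obtain m where "\<forall>l\<in>{..<L}. \<exists>q Mx Mz bb ex ez f. D l = soc_constraint m q Mx Mz bb ex ez f"
    unfolding eventually_sequentially by (meson order_refl)
  then have "\<forall>l. l < L \<longrightarrow> (\<exists>q Mx Mz bb ex ez f. D l = soc_constraint m q Mx Mz bb ex ez f)"
    by simp
  then obtain q Mx Mz bb ex ez f
    where D: "\<forall>l<L. D l = soc_constraint m (q l) (Mx l) (Mz l) (bb l) (ex l) (ez l) (f l)"
    unfolding choice_iff' by blast
  have "x \<in> F \<longleftrightarrow>
      (\<exists>z. \<forall>l<L. soc_constraint m (q l) (Mx l) (Mz l) (bb l) (ex l) (ez l) (f l) x z)" for x
    using D unfolding F D_def L_def all_set_conv_all_nth by (auto simp: fun_eq_iff)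
  then show ?thesis
    unfolding socp_reformulable_def
    by (intro exI[of _ m] exI[of _ L] exI[of _ q] exI[of _ Mx] exI[of _ Mz] exI[of _ bb]
        exI[of _ ex] exI[of _ ez] exI[of _ f] exI[of _ c] exI[of _ "\<lambda>_. 0"]) simp
qed

section \<open>Geometric means and power cones\<close>

lemma rotated_cone_iff:
  fixes a b y :: real
  shows "sqrt ((2 * y)\<^sup>2 + (a - b)\<^sup>2) \<le> a + b \<longleftrightarrow> 0 \<le> a \<and> 0 \<le> b \<and> y\<^sup>2 \<le> a * b"
proof -
  define s where "s = (2 * y)\<^sup>2 + (a - b)\<^sup>2"
  have s0: "0 \<le> s" unfolding s_def by simp
  have gap: "(a + b)\<^sup>2 = s + 4 * (a * b - y\<^sup>2)"
    unfolding s_def by (simp add: power2_eq_square algebra_simps)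
  have "0 \<le> a \<and> 0 \<le> b" if "0 \<le> a + b" "y\<^sup>2 \<le> a * b"
  proof -
    have "0 \<le> a * b" using that(2) zero_le_power2[of y] by linarith
    then show ?thesis using that(1) by (auto simp: zero_le_mult_iff)
  qed
  moreover have "sqrt s \<le> a + b \<longleftrightarrow> 0 \<le> a + b \<and> s \<le> (a + b)\<^sup>2"
  proof
    assume "sqrt s \<le> a + b"
    moreover from this have "0 \<le> a + b" using real_sqrt_ge_zero[OF s0] by linarith
    ultimately show "0 \<le> a + b \<and> s \<le> (a + b)\<^sup>2" using real_sqrt_le_iff'[OF s0] by blast
  qed (use real_sqrt_le_iff'[OF s0] in blast)
  ultimately show ?thesis
    unfolding gap s_def[symmetric] by auto
qed

lemma soc_repr_rotated_cone:
  assumes "affine_form a" "affine_form b" "affine_form y"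
  shows "soc_repr (\<lambda>x w. 0 \<le> a x w \<and> 0 \<le> b x w \<and> (y x w)\<^sup>2 \<le> a x w * b x w)"
proof (rule soc_repr_cong[OF soc_repr_soc_pred])
  define u where "u i = (if i = 0 then (\<lambda>x w. 2 * y x w) else (\<lambda>x w. a x w - b x w))" for i :: nat
  have u: "affine_form (u i)" for i
    unfolding u_def using assms by (simp add: affine_form_scale affine_form_diff)
  then show "soc_pred (\<lambda>x w. sqrt (\<Sum>i<2. (u i x w)\<^sup>2) \<le> a x w + b x w)"
    unfolding soc_pred_def
    by (intro exI[of _ 2] exI[of _ u] exI[of _ "\<lambda>x w. a x w + b x w"] conjI allI impI refl
        affine_form_add assms u)
  show "sqrt (\<Sum>i<2. (u i x w)\<^sup>2) \<le> a x w + b x w \<longleftrightarrow>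
      0 \<le> a x w \<and> 0 \<le> b x w \<and> (y x w)\<^sup>2 \<le> a x w * b x w" for x w
    using rotated_cone_iff[of "y x w" "a x w" "b x w"]
    by (simp add: u_def numeral_2_eq_2 power2_eq_square)
qed

definition geomean_ge :: "nat \<Rightarrow> (nat \<Rightarrow> real) \<Rightarrow> real \<Rightarrow> bool" where
  "geomean_ge K w y \<longleftrightarrow> 0 \<le> y \<and> (\<forall>j<2^K. 0 \<le> w j) \<and> y ^ 2^K \<le> (\<Prod>j<2^K. w j)"

lemma prod_lessThan_add:
  fixes f :: "nat \<Rightarrow> 'a::comm_monoid_mult"
  shows "(\<Prod>j<m + n. f j) = (\<Prod>j<m. f j) * (\<Prod>j<n. f (m + j))"
  by (induction n) (simp_all add: mult.assoc)

lemma all_lessThan_add_iff: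
  fixes m n :: nat
  shows "(\<forall>j<m + n. P j) \<longleftrightarrow> (\<forall>j<m. P j) \<and> (\<forall>j<n. P (m + j))"
proof -
  have "P j" if "\<forall>j<m. P j" "\<forall>j<n. P (m + j)" "j < m + n" for j
    using that by (cases "j < m") (auto dest: spec[of _ "j - m"])
  then show ?thesis by auto
qed

lemma geomean_ge_nonneg: "geomean_ge K w y \<Longrightarrow> 0 \<le> y"
  by (simp add: geomean_ge_def)

lemma geomean_ge_0: "geomean_ge 0 w y \<longleftrightarrow> 0 \<le> y \<and> y \<le> w 0"
  by (auto simp: geomean_ge_def)

lemma power_le_mult_iff_ex_roots:
  fixes y P1 P2 :: real
  assumes "0 < N" "0 \<le> y" "0 \<le> P1" "0 \<le> P2"
  shows "y ^ N \<le> P1 * P2 \<longleftrightarrow> (\<exists>a b. 0 \<le> a \<and> a ^ N \<le> P1 \<and> 0 \<le> b \<and> b ^ N \<le> P2 \<and> y \<le> a * b)"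
proof
  assume le: "y ^ N \<le> P1 * P2"
  have a: "0 \<le> root N P1" "root N P1 ^ N = P1" and b: "0 \<le> root N P2" "root N P2 ^ N = P2"
    using assms by (simp_all add: real_root_pow_pos2)
  then have "y ^ N \<le> (root N P1 * root N P2) ^ N"
    using le by (simp add: power_mult_distrib)
  then have "y \<le> root N P1 * root N P2"
    using assms a b by (simp add: power_mono_iff)
  then show "\<exists>a b. 0 \<le> a \<and> a ^ N \<le> P1 \<and> 0 \<le> b \<and> b ^ N \<le> P2 \<and> y \<le> a * b"
    using a b by (intro exI[of _ "root N P1"] exI[of _ "root N P2"]) simp
next
  assume "\<exists>a b. 0 \<le> a \<and> a ^ N \<le> P1 \<and> 0 \<le> b \<and> b ^ N \<le> P2 \<and> y \<le> a * b"
  then obtain a b where ab: "0 \<le> a" "a ^ N \<le> P1" "0 \<le> b" "b ^ N \<le> P2" "y \<le> a * b"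
    by blast
  have "y ^ N \<le> (a * b) ^ N"
    using assms ab by (simp add: power_mono)
  also have "\<dots> = a ^ N * b ^ N"
    by (rule power_mult_distrib)
  also have "\<dots> \<le> P1 * P2"
    using ab assms by (intro mult_mono) simp_all
  finally show "y ^ N \<le> P1 * P2" .
qed

lemma geomean_ge_Suc:
  "geomean_ge (Suc K) w y \<longleftrightarrow>
     (\<exists>a b. geomean_ge K w a \<and> geomean_ge K (\<lambda>j. w (2^K + j)) b \<and> 0 \<le> y \<and> y\<^sup>2 \<le> a * b)"
proof -
  let ?N = "2^K :: nat"
  define P1 P2 where "P1 = (\<Prod>j<?N. w j)" and "P2 = (\<Prod>j<?N. w (?N + j))"
  have N: "2^Suc K = ?N + ?N" by simp
  have "geomean_ge (Suc K) w y \<longleftrightarrow>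
      0 \<le> y \<and> (\<forall>j<?N. 0 \<le> w j) \<and> (\<forall>j<?N. 0 \<le> w (?N + j)) \<and> (y\<^sup>2) ^ ?N \<le> P1 * P2"
    unfolding geomean_ge_def N all_lessThan_add_iff prod_lessThan_add P1_def P2_def
    by (simp add: power_mult[symmetric] mult.commute mult_2)
  also have "\<dots> \<longleftrightarrow> 0 \<le> y \<and> (\<forall>j<?N. 0 \<le> w j) \<and> (\<forall>j<?N. 0 \<le> w (?N + j)) \<and>
      (\<exists>a b. 0 \<le> a \<and> a ^ ?N \<le> P1 \<and> 0 \<le> b \<and> b ^ ?N \<le> P2 \<and> y\<^sup>2 \<le> a * b)"
  proof -
    have "(y\<^sup>2) ^ ?N \<le> P1 * P2 \<longleftrightarrow>
        (\<exists>a b. 0 \<le> a \<and> a ^ ?N \<le> P1 \<and> 0 \<le> b \<and> b ^ ?N \<le> P2 \<and> y\<^sup>2 \<le> a * b)"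
      if "\<forall>j<?N. 0 \<le> w j" "\<forall>j<?N. 0 \<le> w (?N + j)"
      unfolding P1_def P2_def using that by (intro power_le_mult_iff_ex_roots) (auto intro: prod_nonneg)
    then show ?thesis by blast
  qed
  also have "\<dots> \<longleftrightarrow>
      (\<exists>a b. geomean_ge K w a \<and> geomean_ge K (\<lambda>j. w (2^K + j)) b \<and> 0 \<le> y \<and> y\<^sup>2 \<le> a * b)"
    unfolding geomean_ge_def P1_def P2_def by blast
  finally show ?thesis .
qed

lemma soc_repr_geomean_ge:
  assumes "\<And>j. affine_form (w j)" "affine_form y"
  shows "soc_repr (\<lambda>x z. geomean_ge K (\<lambda>j. w j x z) (y x z))"
  using assms
proof (induction K arbitrary: w y)
  case 0
  have "soc_repr (\<lambda>x z. 0 \<le> y x z \<and> y x z \<le> w 0 x z)"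
    using 0 by (intro soc_repr_conj soc_repr_nonneg soc_repr_le)
  then show ?case
    by (rule soc_repr_cong) (simp add: geomean_ge_0)
next
  case (Suc K)
  define Q where "Q x z u \<longleftrightarrow> geomean_ge K (\<lambda>j. w j x z) (u 0) \<and>
      geomean_ge K (\<lambda>j. w (2^K + j) x z) (u 1) \<and>
      (0 \<le> u 0 \<and> 0 \<le> u 1 \<and> (y x z)\<^sup>2 \<le> u 0 * u 1) \<and> 0 \<le> y x z"
    for x z and u :: "nat \<Rightarrow> real"
  have "soc_repr (\<lambda>x z. Q x (\<lambda>i. z (2 * i)) (\<lambda>i. z (2 * i + 1)))"
    unfolding Q_def
    by (intro soc_repr_conj Suc.IH soc_repr_rotated_cone soc_repr_nonneg affine_form_var
        affine_form_subst[OF Suc.prems(1)] affine_form_subst[OF Suc.prems(2)])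
  then have "soc_repr (\<lambda>x z. \<exists>u. Q x z u)"
    by (rule soc_repr_exists)
  moreover have "(\<exists>u. Q x z u) \<longleftrightarrow> geomean_ge (Suc K) (\<lambda>j. w j x z) (y x z)" for x z
  proof
    assume "\<exists>u. Q x z u"
    then show "geomean_ge (Suc K) (\<lambda>j. w j x z) (y x z)"
      unfolding Q_def geomean_ge_Suc by blast
  next
    assume "geomean_ge (Suc K) (\<lambda>j. w j x z) (y x z)"
    then obtain a b where "geomean_ge K (\<lambda>j. w j x z) a" "geomean_ge K (\<lambda>j. w (2^K + j) x z) b"
      "0 \<le> y x z" "(y x z)\<^sup>2 \<le> a * b"
      unfolding geomean_ge_Suc by blast
    then have "Q x z (\<lambda>i. if i = 0 then a else b)"
      unfolding Q_def by (simp add: geomean_ge_nonneg)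
    then show "\<exists>u. Q x z u" by blast
  qed
  ultimately show ?case
    by (rule soc_repr_cong)
qed

lemma prod_three_blocks:
  fixes r u t :: real
  assumes "b \<le> a" "a \<le> N"
  shows "(\<Prod>j<N. if j < b then r else if j < a then u else t) = r ^ b * u ^ (a - b) * t ^ (N - a)"
proof -
  let ?f = "\<lambda>j. if j < b then r else if j < a then u else t"
  have "(\<Prod>j<N. ?f j) = prod ?f {0..<b} * prod ?f {b..<a} * prod ?f {a..<N}"
    using prod.atLeastLessThan_concat[of 0 b N ?f] prod.atLeastLessThan_concat[of b a N ?f] assms
    by (simp add: atLeast0LessThan mult.assoc)
  also have "\<dots> = prod (\<lambda>_. r) {0..<b} * prod (\<lambda>_. u) {b..<a} * prod (\<lambda>_. t) {a..<N}"
    using assms by (intro arg_cong2[where f = times] prod.cong) auto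
  finally show ?thesis by simp
qed

text \<open>The geometric mean is taken of \<open>2^a\<close> numbers; the \<open>2^a - a\<close> surplus places are
  filled with \<open>t\<close> itself, which then cancels.\<close>

lemma geomean_ge_power_iff:
  fixes r u t :: real
  assumes "1 \<le> b" "b \<le> a" "0 \<le> r" "0 \<le> u" "0 \<le> t"
  shows "geomean_ge a (\<lambda>j. if j < b then r else if j < a then u else t) t \<longleftrightarrow>
    t ^ a \<le> r ^ b * u ^ (a - b)"
proof -
  have a: "a \<le> 2 ^ a" using less_exp[of a] by linarith
  have "t ^ 2^a = t ^ a * t ^ (2^a - a)"
    using a by (simp add: power_add[symmetric])
  then have "t ^ 2^a \<le> r ^ b * u ^ (a - b) * t ^ (2^a - a) \<longleftrightarrow> t ^ a \<le> r ^ b * u ^ (a - b)"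
    using assms by (cases "t = 0") (simp_all add: zero_power mult_le_cancel_right_pos)
  then show ?thesis
    using assms a by (simp add: geomean_ge_def prod_three_blocks)
qed

lemma soc_repr_power_cone:
  assumes "1 \<le> b" "b \<le> a" "affine_form t" "affine_form r" "affine_form u"
  shows "soc_repr (\<lambda>x z. 0 \<le> t x z \<and> 0 \<le> r x z \<and> 0 \<le> u x z \<and> t x z ^ a \<le> r x z ^ b * u x z ^ (a - b))"
proof -
  have "affine_form (\<lambda>x z. if j < b then r x z else if j < a then u x z else t x z)" for j
    using assms by (cases "j < b"; cases "j < a") simp_all
  then have "soc_repr (\<lambda>x z. 0 \<le> t x z \<and> 0 \<le> r x z \<and> 0 \<le> u x z \<and>
      geomean_ge a (\<lambda>j. if j < b then r x z else if j < a then u x z else t x z) (t x z))"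
    using assms by (intro soc_repr_conj soc_repr_nonneg soc_repr_geomean_ge)
  then show ?thesis
    by (rule soc_repr_cong) (use assms geomean_ge_power_iff in blast)
qed

lemma soc_repr_power_le:
  assumes "1 \<le> d" "affine_form t" "affine_form u"
  shows "soc_repr (\<lambda>x z. 0 \<le> t x z \<and> t x z ^ d \<le> u x z)"
proof (rule soc_repr_cong)
  show "soc_repr (\<lambda>x z. 0 \<le> t x z \<and> 0 \<le> u x z \<and> 0 \<le> (1::real) \<and> t x z ^ d \<le> u x z ^ 1 * 1 ^ (d - 1))"
    using assms by (intro soc_repr_power_cone affine_form_const) auto
  show "(0 \<le> t x z \<and> 0 \<le> u x z \<and> 0 \<le> (1::real) \<and> t x z ^ d \<le> u x z ^ 1 * 1 ^ (d - 1)) \<longleftrightarrow>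
      0 \<le> t x z \<and> t x z ^ d \<le> u x z" for x z
  proof -
    have "0 \<le> u x z" if "0 \<le> t x z" "t x z ^ d \<le> u x z"
      using that zero_le_power[OF that(1), of d] by linarith
    then show ?thesis by auto
  qed
qed

section \<open>The \<open>p\<close>-norm\<close>

lemma linf_le_iff: "linf x \<le> u \<longleftrightarrow> (\<forall>i. \<bar>x $ i\<bar> \<le> u)"
  unfolding linf_def by (subst Max_le_iff) auto

lemma abs_le_linf: "\<bar>x $ i\<bar> \<le> linf x"
  unfolding linf_def by (rule Max_ge) auto

lemma linf_nonneg: "0 \<le> linf x"
  using abs_le_linf[of x undefined] by linarith

lemma pnorm_nonneg: "0 \<le> pnorm p x"
  unfolding pnorm_def using linf_nonneg by auto

lemma powr_le_scaled_iff:
  fixes t \<rho> U :: real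
  assumes "1 \<le> b" "b \<le> a" "0 < U" "0 \<le> t" "0 \<le> \<rho>"
  shows "t powr (a / b) \<le> \<rho> * U powr (a / b - 1) \<longleftrightarrow> t ^ a \<le> \<rho> ^ b * U ^ (a - b)"
proof -
  have "(t powr (a / b)) ^ b = t ^ a"
  proof (cases "t = 0")
    case False
    then have "(t powr (a / b)) ^ b = t powr real a"
      using assms by (simp add: powr_power)
    then show ?thesis
      using False assms by (simp add: powr_realpow)
  qed (use assms in \<open>simp add: power_0_left\<close>)
  moreover have "(\<rho> * U powr (a / b - 1)) ^ b = \<rho> ^ b * U ^ (a - b)"
  proof -
    have "(U powr (a / b - 1)) ^ b = U powr (real b * (a / b - 1))"
      using assms by (simp add: powr_power)
    also have "real b * (a / b - 1) = real (a - b)"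
      using assms by (simp add: of_nat_diff field_simps)
    also have "U powr real (a - b) = U ^ (a - b)"
      using assms by (intro powr_realpow)
    finally show ?thesis
      by (simp add: power_mult_distrib)
  qed
  moreover have "0 < b" using assms by simp
  ultimately show ?thesis
    using assms by (metis power_mono_iff powr_ge_zero zero_le_mult_iff)
qed

lemma powr_inverse_le_iff:
  fixes S U P :: real
  assumes "0 \<le> S" "0 < U" "0 < P"
  shows "S powr (1 / P) \<le> U \<longleftrightarrow> S \<le> U powr P"
proof
  assume "S powr (1 / P) \<le> U"
  then have "(S powr (1 / P)) powr P \<le> U powr P"
    using assms by (intro powr_mono2) auto
  then show "S \<le> U powr P"
    using assms by (simp add: powr_powr)
next
  assume "S \<le> U powr P"
  then have "S powr (1 / P) \<le> (U powr P) powr (1 / P)"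
    using assms by (intro powr_mono2) auto
  then show "S powr (1 / P) \<le> U"
    using assms by (simp add: powr_powr)
qed

lemma sum_le_powr_split_iff:
  fixes s :: "'i \<Rightarrow> real" and U P :: real
  assumes "0 < U" "\<And>i. 0 \<le> s i"
  shows "(\<Sum>i\<in>I. s i) \<le> U powr P \<longleftrightarrow>
    (\<exists>\<rho>. (\<forall>i\<in>I. 0 \<le> \<rho> i \<and> s i \<le> \<rho> i * U powr (P - 1)) \<and> (\<Sum>i\<in>I. \<rho> i) \<le> U)"
proof
  have U: "U powr P = U powr (P - 1) * U" "0 < U powr (P - 1)"
    using assms by (simp_all add: powr_diff)
  {
    assume "(\<Sum>i\<in>I. s i) \<le> U powr P"
    then have "(\<Sum>i\<in>I. s i / U powr (P - 1)) \<le> U"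
      using U by (simp add: sum_divide_distrib[symmetric] divide_le_eq mult.commute)
    then show "\<exists>\<rho>. (\<forall>i\<in>I. 0 \<le> \<rho> i \<and> s i \<le> \<rho> i * U powr (P - 1)) \<and> (\<Sum>i\<in>I. \<rho> i) \<le> U"
      using U assms(2) by (intro exI[of _ "\<lambda>i. s i / U powr (P - 1)"]) auto
  }
  assume "\<exists>\<rho>. (\<forall>i\<in>I. 0 \<le> \<rho> i \<and> s i \<le> \<rho> i * U powr (P - 1)) \<and> (\<Sum>i\<in>I. \<rho> i) \<le> U"
  then obtain \<rho> where \<rho>: "\<forall>i\<in>I. s i \<le> \<rho> i * U powr (P - 1)" "(\<Sum>i\<in>I. \<rho> i) \<le> U"
    by blast
  have "(\<Sum>i\<in>I. s i) \<le> (\<Sum>i\<in>I. \<rho> i) * U powr (P - 1)"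
    using \<rho>(1) by (simp add: sum_distrib_right sum_mono)
  also have "\<dots> \<le> U powr P"
    using \<rho>(2) U by (simp add: mult_right_mono)
  finally show "(\<Sum>i\<in>I. s i) \<le> U powr P" .
qed

text \<open>The power-cone description of \<open>\<parallel>x\<parallel>_(a/b) \<le> U\<close>; for \<open>U > 0\<close> the multiplier \<open>\<rho> i\<close>
  stands for \<open>|x i|^p / U^(p - 1)\<close>.\<close>

definition pnorm_le_certified :: "nat \<Rightarrow> nat \<Rightarrow> real^'n \<Rightarrow> real \<Rightarrow> bool" where
  "pnorm_le_certified a b x U \<longleftrightarrow> (\<exists>t \<rho>. (\<forall>i. \<bar>x $ i\<bar> \<le> t i \<and>
     (0 \<le> t i \<and> 0 \<le> \<rho> i \<and> 0 \<le> U \<and> t i ^ a \<le> \<rho> i ^ b * U ^ (a - b))) \<and> sum \<rho> UNIV \<le> U)"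

lemma pnorm_le_certified_neg: "U < 0 \<Longrightarrow> \<not> pnorm_le_certified a b x U"
  by (auto simp: pnorm_le_certified_def dest: spec[of _ undefined])

lemma pnorm_le_certified_zero_iff:
  assumes "1 \<le> b" "b \<le> a"
  shows "pnorm_le_certified a b x 0 \<longleftrightarrow> x = 0"
proof
  assume "pnorm_le_certified a b x 0"
  then obtain t \<rho> where xt: "\<And>i. \<bar>x $ i\<bar> \<le> t i" and t0: "\<And>i. 0 \<le> t i"
    and \<rho>0: "\<And>i. 0 \<le> \<rho> i" and t: "\<And>i. t i ^ a \<le> \<rho> i ^ b * 0 ^ (a - b)"
    and "sum \<rho> UNIV \<le> 0"
    unfolding pnorm_le_certified_def by auto
  then have "\<rho> i = 0" for i
    using sum_nonneg_eq_0_iff[of UNIV \<rho>] by (simp add: order_antisym sum_nonneg)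
  then have "t i ^ a \<le> 0" for i
    using t[of i] assms by (simp add: power_0_left)
  then have "t i = 0" for i
    using zero_le_power[OF t0, of i a] by (metis order_antisym power_eq_0_iff)
  then show "x = 0"
    using xt by (metis abs_le_zero_iff vec_eq_iff zero_index)
qed (use assms in \<open>auto simp: pnorm_le_certified_def power_0_left intro!: exI[of _ "\<lambda>_. 0"]\<close>)

lemma pnorm_rat_le_pos_iff:
  fixes x :: "real^'n"
  assumes ab: "1 \<le> b" "b \<le> a" and P: "P = a / b" and U: "0 < U"
  shows "(\<Sum>i\<in>UNIV. \<bar>x $ i\<bar> powr P) powr (1 / P) \<le> U \<longleftrightarrow> pnorm_le_certified a b x U"
proof -
  have P0: "0 < P" using ab P by simp
  define s where "s i = \<bar>x $ i\<bar> powr P" for i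
  have coord: "0 \<le> \<rho> \<and> s i \<le> \<rho> * U powr (P - 1) \<longleftrightarrow>
      (\<exists>\<tau>. \<bar>x $ i\<bar> \<le> \<tau> \<and> (0 \<le> \<tau> \<and> 0 \<le> \<rho> \<and> 0 \<le> U \<and> \<tau> ^ a \<le> \<rho> ^ b * U ^ (a - b)))" for i \<rho>
  proof
    assume "0 \<le> \<rho> \<and> s i \<le> \<rho> * U powr (P - 1)"
    then show "\<exists>\<tau>. \<bar>x $ i\<bar> \<le> \<tau> \<and> (0 \<le> \<tau> \<and> 0 \<le> \<rho> \<and> 0 \<le> U \<and> \<tau> ^ a \<le> \<rho> ^ b * U ^ (a - b))"
      using U ab powr_le_scaled_iff[of b a U "\<bar>x $ i\<bar>" \<rho>] unfolding s_def P
      by (intro exI[of _ "\<bar>x $ i\<bar>"]) auto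
  next
    assume "\<exists>\<tau>. \<bar>x $ i\<bar> \<le> \<tau> \<and> (0 \<le> \<tau> \<and> 0 \<le> \<rho> \<and> 0 \<le> U \<and> \<tau> ^ a \<le> \<rho> ^ b * U ^ (a - b))"
    then obtain \<tau> where \<tau>: "\<bar>x $ i\<bar> \<le> \<tau>" "0 \<le> \<rho>" "\<tau> powr P \<le> \<rho> * U powr (P - 1)"
      using U ab powr_le_scaled_iff[of b a U _ \<rho>] unfolding P by auto
    moreover have "s i \<le> \<tau> powr P"
      unfolding s_def using \<tau>(1) P0 by (intro powr_mono2) auto
    ultimately show "0 \<le> \<rho> \<and> s i \<le> \<rho> * U powr (P - 1)" by simp
  qed
  have "(\<Sum>i\<in>UNIV. \<bar>x $ i\<bar> powr P) powr (1 / P) \<le> U \<longleftrightarrow> sum s UNIV \<le> U powr P"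
    unfolding s_def using U P0 by (intro powr_inverse_le_iff sum_nonneg) auto
  also have "\<dots> \<longleftrightarrow> (\<exists>\<rho>. (\<forall>i. 0 \<le> \<rho> i \<and> s i \<le> \<rho> i * U powr (P - 1)) \<and> sum \<rho> UNIV \<le> U)"
    using sum_le_powr_split_iff[OF U, of s UNIV P] by (simp add: s_def)
  also have "\<dots> \<longleftrightarrow> pnorm_le_certified a b x U"
    unfolding coord choice_iff pnorm_le_certified_def by blast
  finally show ?thesis .
qed

lemma pnorm_rat_le_iff:
  fixes x :: "real^'n"
  assumes ab: "1 \<le> b" "b \<le> a" and P: "P = a / b"
  shows "(\<Sum>i\<in>UNIV. \<bar>x $ i\<bar> powr P) powr (1 / P) \<le> U \<longleftrightarrow> pnorm_le_certified a b x U"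
proof -
  have P0: "0 < P" using ab P by simp
  have S0: "0 \<le> (\<Sum>i\<in>UNIV. \<bar>x $ i\<bar> powr P) powr (1 / P)"
    by simp
  consider "U < 0" | "U = 0" | "0 < U" by linarith
  then show ?thesis
  proof cases
    case 1
    then show ?thesis using S0 pnorm_le_certified_neg by fastforce
  next
    case 2
    have "(\<Sum>i\<in>UNIV. \<bar>x $ i\<bar> powr P) powr (1 / P) \<le> 0 \<longleftrightarrow> x = 0"
      using S0 P0 by (simp add: sum_nonneg_eq_0_iff vec_eq_iff)
    with 2 show ?thesis by (simp add: pnorm_le_certified_zero_iff[OF ab])
  qed (rule pnorm_rat_le_pos_iff[OF ab P])
qed

lemma Rats_ge_1_fraction:
  assumes "q \<in> \<rat>" "1 \<le> q"
  obtains a b :: nat where "1 \<le> b" "b \<le> a" "q = a / b"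
proof -
  obtain a b :: int where b: "0 < b" and q: "q = of_int a / of_int b"
    using Rats_cases'[OF assms(1)] by metis
  then have "b \<le> a"
    using assms(2) by (simp add: le_divide_eq)
  then show thesis
    using b q by (intro that[of "nat b" "nat a"]) auto
qed

lemma soc_repr_pnorm_le:
  assumes p: "p = \<infinity> \<or> (\<exists>q\<in>\<rat>. p = ereal q \<and> q \<ge> 1)" and u: "affine_form u"
  shows "soc_repr (\<lambda>(x::real^'n) z. pnorm p x \<le> u x z)"
proof (cases "p = \<infinity>")
  case True
  have "soc_repr (\<lambda>(x::real^'n) z. \<forall>i. x $ i \<le> u x z \<and> - x $ i \<le> u x z)"
    using u by (intro soc_repr_All soc_repr_conj soc_repr_le affine_form_intros)
  then show ?thesis
    by (rule soc_repr_cong) (simp add: True pnorm_def linf_le_iff abs_le_iff)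
next
  case False
  then obtain q where q: "q \<in> \<rat>" "1 \<le> q" "p = ereal q"
    using p by blast
  obtain a b :: nat where ab: "1 \<le> b" "b \<le> a" "q = a / b"
    using q(1,2) by (rule Rats_ge_1_fraction)
  have "soc_repr (\<lambda>(x::real^'n) z. \<exists>t \<rho>. (\<forall>i. (x $ i \<le> t i \<and> - x $ i \<le> t i) \<and>
      (0 \<le> t i \<and> 0 \<le> \<rho> i \<and> 0 \<le> u x z \<and> t i ^ a \<le> \<rho> i ^ b * u x z ^ (a - b))) \<and>
      sum \<rho> UNIV \<le> u x z)"
    by (intro soc_repr_exists_countable soc_repr_power_cone soc_repr_conj soc_repr_All soc_repr_le
        affine_form_intros affine_form_subst[OF u]) (use ab in auto)
  then show ?thesis
    by (rule soc_repr_cong)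
      (simp add: q pnorm_def pnorm_rat_le_iff[OF ab] pnorm_le_certified_def abs_le_iff)
qed

lemma soc_repr_pnorm_power_le:
  assumes p: "p = \<infinity> \<or> (\<exists>q\<in>\<rat>. p = ereal q \<and> q \<ge> 1)" and u: "affine_form u"
  shows "soc_repr (\<lambda>(x::real^'n) z. pnorm p x ^ d \<le> u x z)"
proof (cases "d = 0")
  case True
  then show ?thesis
    using soc_repr_le[OF affine_form_const u, of 1] by simp
next
  case False
  have "soc_repr (\<lambda>(x::real^'n) z. \<exists>t. pnorm p x \<le> t \<and> (0 \<le> t \<and> t ^ d \<le> u x z))"
    by (intro soc_repr_exists_real soc_repr_conj soc_repr_pnorm_le[OF p] soc_repr_power_le
        affine_form_intros affine_form_subst[OF u]) (use False in auto)
  moreover have "(\<exists>t. pnorm p x \<le> t \<and> (0 \<le> t \<and> t ^ d \<le> u x z)) \<longleftrightarrow> pnorm p x ^ d \<le> u x z"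
    for x z
  proof
    assume "\<exists>t. pnorm p x \<le> t \<and> (0 \<le> t \<and> t ^ d \<le> u x z)"
    then obtain t where "pnorm p x \<le> t" "t ^ d \<le> u x z"
      by blast
    then show "pnorm p x ^ d \<le> u x z"
      using power_mono[OF _ pnorm_nonneg, of p x t d] by linarith
  qed (use pnorm_nonneg in blast)
  ultimately show ?thesis
    by (rule soc_repr_cong)
qed

section \<open>Robust linear constraints over a polyhedron\<close>

lemma convex_cone_hull_subset_nonneg_combinations:
  fixes g :: "'i \<Rightarrow> 'a::real_vector"
  assumes "finite I"
  shows "convex_cone hull (g ` I) \<subseteq> {\<Sum>i\<in>I. l i *\<^sub>R g i | l. \<forall>i\<in>I. 0 \<le> l i}"
proof (rule hull_minimal)
  show "g ` I \<subseteq> {\<Sum>i\<in>I. l i *\<^sub>R g i | l. \<forall>i\<in>I. 0 \<le> l i}"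
  proof clarify
    fix j assume "j \<in> I"
    then have "g j = (\<Sum>i\<in>I. (if i = j then 1 else 0) *\<^sub>R g i)"
      using assms by (simp add: if_distrib[of "\<lambda>c. c *\<^sub>R _"] sum.delta cong: if_cong)
    then show "\<exists>l. g j = (\<Sum>i\<in>I. l i *\<^sub>R g i) \<and> (\<forall>i\<in>I. 0 \<le> l i)"
      by (intro exI[of _ "\<lambda>i. if i = j then 1 else 0"]) simp
  qed
  show "convex_cone {\<Sum>i\<in>I. l i *\<^sub>R g i | l. \<forall>i\<in>I. 0 \<le> l i}"
    unfolding convex_cone_iff
  proof (safe intro!: CollectI)
    show "\<exists>l. 0 = (\<Sum>i\<in>I. l i *\<^sub>R g i) \<and> (\<forall>i\<in>I. 0 \<le> l i)"
      by (intro exI[of _ "\<lambda>_. 0"]) simp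
  next
    fix l l' :: "'i \<Rightarrow> real" assume "\<forall>i\<in>I. 0 \<le> l i" "\<forall>i\<in>I. 0 \<le> l' i"
    then show "\<exists>l''. (\<Sum>i\<in>I. l i *\<^sub>R g i) + (\<Sum>i\<in>I. l' i *\<^sub>R g i) = (\<Sum>i\<in>I. l'' i *\<^sub>R g i) \<and>
        (\<forall>i\<in>I. 0 \<le> l'' i)"
      by (intro exI[of _ "\<lambda>i. l i + l' i"]) (simp add: scaleR_add_left sum.distrib)
  next
    fix l :: "'i \<Rightarrow> real" and c :: real assume "\<forall>i\<in>I. 0 \<le> l i" "0 \<le> c"
    then show "\<exists>l'. c *\<^sub>R (\<Sum>i\<in>I. l i *\<^sub>R g i) = (\<Sum>i\<in>I. l' i *\<^sub>R g i) \<and> (\<forall>i\<in>I. 0 \<le> l' i)"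
      by (intro exI[of _ "\<lambda>i. c * l i"]) (simp add: scaleR_sum_right)
  qed
qed

lemma conic_inner_lower_bound_nonneg:
  assumes "conic K" "x \<in> K" "\<forall>y\<in>K. \<beta> < w \<bullet> y"
  shows "0 \<le> w \<bullet> x"
proof (rule ccontr)
  assume "\<not> 0 \<le> w \<bullet> x"
  then have neg: "w \<bullet> x < 0" by simp
  define s where "s = (\<bar>\<beta>\<bar> + 1) / - (w \<bullet> x)"
  have "0 \<le> s" using neg by (simp add: s_def divide_nonneg_neg)
  then have "\<beta> < w \<bullet> (s *\<^sub>R x)"
    using assms unfolding conic_def by blast
  moreover have "w \<bullet> (s *\<^sub>R x) = - (\<bar>\<beta>\<bar> + 1)"
    using neg by (simp add: s_def)
  ultimately show False by linarith
qed

text \<open>A functional \<open>(wa, ws)\<close> separating \<open>(M, t)\<close> from the cone spanned by the \<open>(a i, c i)\<close>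
  and \<open>(0, 1)\<close> cannot exist: the point \<open>y\<close> below is feasible but violates \<open>M \<bullet> y \<le> t\<close>, for
  \<open>ws > 0\<close> and \<open>ws = 0\<close> alike.\<close>

lemma valid_inequality_not_separable:
  fixes a :: "'i \<Rightarrow> 'a::real_inner"
  assumes y0: "\<forall>i\<in>I. a i \<bullet> y0 \<le> c i"
    and valid: "\<forall>y. (\<forall>i\<in>I. a i \<bullet> y \<le> c i) \<longrightarrow> M \<bullet> y \<le> t"
    and ws: "0 \<le> ws" and wa: "\<forall>i\<in>I. - (wa \<bullet> a i) \<le> ws * c i"
  shows "0 \<le> wa \<bullet> M + ws * t"
proof (rule ccontr)
  define q where "q = - (wa \<bullet> M + ws * t)"
  assume "\<not> 0 \<le> wa \<bullet> M + ws * t"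
  then have q: "0 < q" by (simp add: q_def)
  define s where "s = max 0 ((t - M \<bullet> y0 + 1) / q)"
  have "(t - M \<bullet> y0 + 1) / q \<le> s" "0 \<le> s"
    by (simp_all add: s_def)
  then have s: "0 \<le> s" "t - M \<bullet> y0 + 1 \<le> s * q"
    using q by (simp_all add: pos_divide_le_eq)
  define y where "y = (1 / (1 + s * ws)) *\<^sub>R (y0 - s *\<^sub>R wa)"
  have den: "0 < 1 + s * ws" using s ws by (simp add: add_pos_nonneg)
  have inner_y: "v \<bullet> y = (v \<bullet> y0 - s * (wa \<bullet> v)) / (1 + s * ws)" for v
    by (simp add: y_def inner_diff_right inner_commute)
  have "a i \<bullet> y \<le> c i" if "i \<in> I" for i
  proof -
    have "a i \<bullet> y0 - s * (wa \<bullet> a i) \<le> c i * (1 + s * ws)"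
      using y0 that mult_left_mono[OF wa[rule_format, OF that] s(1)] by (auto simp: algebra_simps)
    then show ?thesis
      unfolding inner_y using den by (simp add: pos_divide_le_eq)
  qed
  then have "M \<bullet> y \<le> t" using valid by blast
  moreover have "t * (1 + s * ws) < M \<bullet> y0 - s * (wa \<bullet> M)"
    using s(2) by (simp add: q_def algebra_simps)
  then have "t < M \<bullet> y"
    unfolding inner_y using den by (simp add: pos_less_divide_eq)
  ultimately show False by simp
qed

lemma affine_farkas:
  fixes a :: "'i \<Rightarrow> 'a::euclidean_space"
  assumes I: "finite I" and y0: "\<forall>i\<in>I. a i \<bullet> y0 \<le> c i"
    and valid: "\<forall>y. (\<forall>i\<in>I. a i \<bullet> y \<le> c i) \<longrightarrow> M \<bullet> y \<le> t"
  shows "\<exists>l. (\<forall>i\<in>I. 0 \<le> l i) \<and> (\<Sum>i\<in>I. l i *\<^sub>R a i) = M \<and> (\<Sum>i\<in>I. l i * c i) \<le> t"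
proof -
  define g where "g j = (case j of None \<Rightarrow> (0, 1) | Some i \<Rightarrow> (a i, c i))" for j
  define J where "J = insert None (Some ` I)"
  define K where "K = convex_cone hull (g ` J)"
  have J: "finite J" using I by (simp add: J_def)
  have sum_J: "(\<Sum>j\<in>J. l j *\<^sub>R g j) = ((\<Sum>i\<in>I. l (Some i) *\<^sub>R a i), (\<Sum>i\<in>I. l (Some i) * c i) + l None)"
    for l :: "'i option \<Rightarrow> real"
    using I by (simp add: J_def g_def sum.reindex fst_sum snd_sum prod_eq_iff)
  have "(M, t) \<in> K"
  proof (rule ccontr)
    assume notin: "(M, t) \<notin> K"
    have "convex K" "closed K"
      unfolding K_def using J by (simp_all add: convex_convex_cone_hull closed_convex_cone_hull)
    then obtain w \<beta> where w: "w \<bullet> (M, t) < \<beta>" "\<forall>x\<in>K. \<beta> < w \<bullet> x"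
      using separating_hyperplane_closed_point[OF _ _ notin] by blast
    obtain wa ws where w_def: "w = (wa, ws)" by (cases w)
    have K: "conic K" "g ` J \<subseteq> K" "0 \<in> K"
      unfolding K_def by (simp_all add: conic_convex_cone_hull hull_subset convex_cone_hull_contains_0)
    have "0 \<le> ws" and "\<forall>i\<in>I. - (wa \<bullet> a i) \<le> ws * c i"
      using conic_inner_lower_bound_nonneg[OF K(1) _ w(2)] K(2)
      by (force simp: J_def g_def w_def)+
    then have "0 \<le> wa \<bullet> M + ws * t"
      by (rule valid_inequality_not_separable[OF y0 valid])
    then show False
      using w K(3) by (force simp: w_def)
  qed
  then obtain l where l: "\<forall>j\<in>J. 0 \<le> l j" and "(M, t) = (\<Sum>j\<in>J. l j *\<^sub>R g j)"
    using convex_cone_hull_subset_nonneg_combinations[OF J, of g] unfolding K_def by blast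
  then have "M = (\<Sum>i\<in>I. l (Some i) *\<^sub>R a i)" "t = (\<Sum>i\<in>I. l (Some i) * c i) + l None"
    by (simp_all add: sum_J)
  moreover have "0 \<le> l None" "\<forall>i\<in>I. 0 \<le> l (Some i)"
    using l by (simp_all add: J_def)
  ultimately show ?thesis
    by (intro exI[of _ "\<lambda>i. l (Some i)"]) auto
qed

lemma affine_farkas_iff:
  fixes a :: "'i \<Rightarrow> 'a::euclidean_space"
  assumes "finite I" "\<forall>i\<in>I. a i \<bullet> y0 \<le> c i"
  shows "(\<forall>y. (\<forall>i\<in>I. a i \<bullet> y \<le> c i) \<longrightarrow> M \<bullet> y \<le> t) \<longleftrightarrow>
    (\<exists>l. (\<forall>i\<in>I. 0 \<le> l i) \<and> (\<Sum>i\<in>I. l i *\<^sub>R a i) = M \<and> (\<Sum>i\<in>I. l i * c i) \<le> t)"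
proof
  assume "\<exists>l. (\<forall>i\<in>I. 0 \<le> l i) \<and> (\<Sum>i\<in>I. l i *\<^sub>R a i) = M \<and> (\<Sum>i\<in>I. l i * c i) \<le> t"
  then obtain l where l: "\<forall>i\<in>I. 0 \<le> l i" "(\<Sum>i\<in>I. l i *\<^sub>R a i) = M" "(\<Sum>i\<in>I. l i * c i) \<le> t"
    by blast
  show "\<forall>y. (\<forall>i\<in>I. a i \<bullet> y \<le> c i) \<longrightarrow> M \<bullet> y \<le> t"
  proof (intro allI impI)
    fix y assume "\<forall>i\<in>I. a i \<bullet> y \<le> c i"
    then have "(\<Sum>i\<in>I. l i * (a i \<bullet> y)) \<le> (\<Sum>i\<in>I. l i * c i)"
      using l(1) by (intro sum_mono mult_left_mono) auto
    then show "M \<bullet> y \<le> t"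
      using l(2,3) by (auto simp: inner_sum_left)
  qed
qed (use affine_farkas[OF assms] in blast)

lemma soc_repr_robust_halfspace:
  fixes a :: "'i::countable \<Rightarrow> 'b::euclidean_space" and L :: "'a::real_inner \<Rightarrow> (nat \<Rightarrow> real) \<Rightarrow> 'b"
  assumes I: "finite I" and L: "\<And>e. affine_form (\<lambda>x z. L x z \<bullet> e)" and t: "affine_form t"
  shows "soc_repr (\<lambda>x z. \<forall>y. (\<forall>i\<in>I. a i \<bullet> y \<le> c i) \<longrightarrow> L x z \<bullet> y \<le> t x z)"
proof (cases "\<exists>y0. \<forall>i\<in>I. a i \<bullet> y0 \<le> c i")
  case False
  show ?thesis
    by (rule soc_repr_cong[OF soc_repr_True]) (use False in blast)
next
  case True
  then obtain y0 where y0: "\<forall>i\<in>I. a i \<bullet> y0 \<le> c i" ..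
  have vec_eq: "(\<Sum>i\<in>I. l i *\<^sub>R a i) = L x z \<longleftrightarrow> (\<forall>e\<in>Basis. (\<Sum>i\<in>I. l i * (a i \<bullet> e)) = L x z \<bullet> e)"
    for l x z
    by (simp add: euclidean_eq_iff[of "\<Sum>i\<in>I. l i *\<^sub>R a i"] inner_sum_left)
  have "soc_repr (\<lambda>x z. \<exists>l. (\<forall>i\<in>I. 0 \<le> l i) \<and>
      (\<forall>e\<in>Basis. (\<Sum>i\<in>I. l i * (a i \<bullet> e)) = L x z \<bullet> e) \<and> (\<Sum>i\<in>I. l i * c i) \<le> t x z)"
    by (intro soc_repr_exists_countable soc_repr_conj soc_repr_Ball soc_repr_nonneg soc_repr_eq soc_repr_le
        affine_form_intros affine_form_subst[OF L] affine_form_subst[OF t] I finite_Basis)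
  then show ?thesis
    by (rule soc_repr_cong) (simp add: affine_farkas_iff[OF I y0] vec_eq)
qed

section \<open>The robust feasible set\<close>

definition outer_prod :: "real^'m \<Rightarrow> real^'n \<Rightarrow> real^'n^'m" where
  "outer_prod h x = (\<chi> i j. h $ i * x $ j)"

lemma inner_outer_prod: "outer_prod h x \<bullet> E = (h v* E) \<bullet> x"
proof -
  have "outer_prod h x \<bullet> E = (\<Sum>i\<in>UNIV. \<Sum>j\<in>UNIV. h $ i * E $ i $ j * x $ j)"
    by (simp add: outer_prod_def inner_vec_def mult_ac)
  also have "\<dots> = (\<Sum>j\<in>UNIV. \<Sum>i\<in>UNIV. h $ i * E $ i $ j * x $ j)"
    by (rule sum.swap)
  also have "\<dots> = (h v* E) \<bullet> x"
    by (simp add: vector_matrix_mult_def inner_vec_def sum_distrib_right)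
  finally show ?thesis .
qed

lemma affine_form_outer_prod: "affine_form (\<lambda>x z. outer_prod h x \<bullet> E)"
  unfolding inner_outer_prod by (rule affine_form_inner)

lemma inner_matrix_vector_mult: "h \<bullet> (A *v x) = outer_prod h x \<bullet> A"
  by (simp add: outer_prod_def inner_vec_def matrix_vector_mult_def sum_distrib_left mult_ac)

lemma matrix_vector_mult_component: "(A *v x) $ l = outer_prod (axis l 1) x \<bullet> A"
  using inner_matrix_vector_mult[of "axis l 1" A x] by (simp add: inner_axis')

lemma trace_transpose_mult: "trace (transpose V ** A) = V \<bullet> (A::real^'n^'n)"
proof -
  have "trace (transpose V ** A) = (\<Sum>j\<in>UNIV. \<Sum>i\<in>UNIV. V $ i $ j * A $ i $ j)"
    by (simp add: trace_def matrix_matrix_mult_def transpose_def)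
  also have "\<dots> = (\<Sum>i\<in>UNIV. \<Sum>j\<in>UNIV. V $ i $ j * A $ i $ j)"
    by (rule sum.swap)
  finally show ?thesis
    by (simp add: inner_vec_def)
qed

lemma UkA_polyhedron:
  obtains I :: "(nat + nat \<times> 'n::finite \<times> bool) set" and a c
  where "finite I" "UkA (U0A s V v) \<gamma> p d k xs ys = {A :: real^'n^'n. \<forall>\<iota>\<in>I. a \<iota> \<bullet> A \<le> c \<iota>}"
proof -
  define \<beta> where "\<beta> j = \<gamma> * pnorm p (xs j) ^ d" for j
  define E where "E j l = outer_prod (axis l 1) (xs j)" for j and l :: 'n
  \<comment> \<open>\<open>Inl j\<close>: trace constraint \<open>j\<close>; \<open>Inr (j, l, pos)\<close>: one side of the \<open>l\<close>-th data constraint \<open>j\<close>\<close>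
  define I :: "(nat + nat \<times> 'n \<times> bool) set" where "I = Inl ` {..<s} \<union> Inr ` ({..<k} \<times> UNIV)"
  define a where "a \<iota> = (case \<iota> of Inl j \<Rightarrow> V j | Inr (j, l, pos) \<Rightarrow> if pos then E j l else - E j l)" for \<iota>
  define c where "c \<iota> = (case \<iota> of Inl j \<Rightarrow> v j
      | Inr (j, l, pos) \<Rightarrow> if pos then \<beta> j + ys j $ l else \<beta> j - ys j $ l)" for \<iota>
  have abs_iff: "\<bar>e - y\<bar> \<le> b \<longleftrightarrow> e \<le> b + y \<and> - e \<le> b - y" for e y b :: real
    by (auto simp: abs_le_iff)
  have "A \<in> UkA (U0A s V v) \<gamma> p d k xs ys \<longleftrightarrow>
      (\<forall>j<s. V j \<bullet> A \<le> v j) \<and> (\<forall>j<k. \<forall>l. \<bar>E j l \<bullet> A - ys j $ l\<bar> \<le> \<beta> j)" for A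
    by (simp add: UkA_def U0A_def \<beta>_def E_def trace_transpose_mult linf_le_iff matrix_vector_mult_component)
  also have "\<dots> A \<longleftrightarrow> (\<forall>\<iota>\<in>I. a \<iota> \<bullet> A \<le> c \<iota>)" for A
    by (simp add: I_def a_def c_def abs_iff all_bool_eq ball_Un) (simp only: Ball_def lessThan_iff)
  moreover have "finite I" by (simp add: I_def)
  ultimately show thesis
    by (intro that[of I]) auto
qed

lemma inner_le_l1_linf: "h \<bullet> g \<le> (\<Sum>l\<in>UNIV. \<bar>h $ l\<bar>) * linf g"
proof -
  have "h \<bullet> g = (\<Sum>l\<in>UNIV. h $ l * g $ l)"
    by (simp add: inner_vec_def)
  also have "\<dots> \<le> (\<Sum>l\<in>UNIV. \<bar>h $ l\<bar> * linf g)"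
  proof (rule sum_mono)
    fix l
    have "h $ l * g $ l \<le> \<bar>h $ l\<bar> * \<bar>g $ l\<bar>"
      by (simp add: abs_mult[symmetric])
    also have "\<dots> \<le> \<bar>h $ l\<bar> * linf g"
      by (intro mult_left_mono abs_le_linf) simp
    finally show "h $ l * g $ l \<le> \<bar>h $ l\<bar> * linf g" .
  qed
  finally show ?thesis
    by (simp add: sum_distrib_right)
qed

lemma inner_sgn_scaled: "h \<bullet> (\<chi> l. sgn (h $ l) * \<rho>) = (\<Sum>l\<in>UNIV. \<bar>h $ l\<bar>) * \<rho>"
  by (simp add: inner_vec_def sum_distrib_right abs_sgn mult.assoc)

lemma linf_sgn_scaled_le: "0 \<le> \<rho> \<Longrightarrow> linf (\<chi> l. sgn (h $ l) * \<rho>) \<le> \<rho>"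
  by (simp add: linf_le_iff abs_mult abs_sgn_eq)

lemma sgn_disturbance_mem_U0g:
  assumes "0 \<le> \<gamma>"
  shows "(\<lambda>y. \<chi> l. sgn (h $ l) * (\<gamma> * pnorm p y ^ d)) \<in> U0g S \<gamma> p d"
  using assms pnorm_nonneg
  by (auto simp: U0g_def intro!: linf_sgn_scaled_le mult_nonneg_nonneg zero_le_power)

lemma inner_U0g_le:
  assumes "g \<in> U0g S \<gamma> p d" "x \<in> S"
  shows "h \<bullet> g x \<le> (\<Sum>l\<in>UNIV. \<bar>h $ l\<bar>) * (\<gamma> * pnorm p x ^ d)"
proof -
  have "h \<bullet> g x \<le> (\<Sum>l\<in>UNIV. \<bar>h $ l\<bar>) * linf (g x)"
    by (rule inner_le_l1_linf)
  also have "\<dots> \<le> (\<Sum>l\<in>UNIV. \<bar>h $ l\<bar>) * (\<gamma> * pnorm p x ^ d)"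
    using assms by (intro mult_left_mono sum_nonneg) (auto simp: U0g_def)
  finally show ?thesis .
qed

lemma robust_feasible_polyS_worst_case:
  fixes h :: "nat \<Rightarrow> real^'n"
  assumes "0 \<le> \<gamma>" "x \<in> robust_feasible (polyS r h b) UA (U0g (polyS r h b) \<gamma> p d)"
    and "i < r" "A \<in> UA"
  shows "h i \<bullet> (A *v x) + (\<Sum>l\<in>UNIV. \<bar>h i $ l\<bar>) * (\<gamma> * pnorm p x ^ d) \<le> b i"
proof -
  let ?g = "\<lambda>y. \<chi> l. sgn (h i $ l) * (\<gamma> * pnorm p y ^ d)"
  have "\<forall>g\<in>U0g (polyS r h b) \<gamma> p d. A *v x + g x \<in> polyS r h b"
    using assms(2,4) by (simp add: robust_feasible_def)
  from bspec[OF this sgn_disturbance_mem_U0g[OF assms(1)]]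
  have "A *v x + ?g x \<in> polyS r h b" by simp
  then have "h i \<bullet> (A *v x + ?g x) \<le> b i"
    using assms(3) unfolding polyS_def by blast
  then show ?thesis
    by (simp add: inner_add_right inner_sgn_scaled)
qed

lemma robust_feasible_polyS_iff:
  fixes h :: "nat \<Rightarrow> real^'n"
  assumes "0 \<le> \<gamma>"
  shows "x \<in> robust_feasible (polyS r h b) UA (U0g (polyS r h b) \<gamma> p d) \<longleftrightarrow>
    (\<forall>i<r. h i \<bullet> x \<le> b i) \<and>
    (\<forall>i<r. \<forall>A\<in>UA. h i \<bullet> (A *v x) + (\<Sum>l\<in>UNIV. \<bar>h i $ l\<bar>) * (\<gamma> * pnorm p x ^ d) \<le> b i)"
    (is "_ \<longleftrightarrow> ?R")
proof
  assume "x \<in> robust_feasible (polyS r h b) UA (U0g (polyS r h b) \<gamma> p d)"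
  with assms show ?R
    by (auto simp: robust_feasible_def polyS_def intro: robust_feasible_polyS_worst_case)
next
  assume x: ?R
  then have xS: "x \<in> polyS r h b"
    by (simp add: polyS_def)
  have "A *v x + g x \<in> polyS r h b" if A: "A \<in> UA" and g: "g \<in> U0g (polyS r h b) \<gamma> p d" for A g
  proof -
    have "h i \<bullet> (A *v x) + h i \<bullet> g x \<le> b i" if "i < r" for i
    proof -
      have "h i \<bullet> (A *v x) + (\<Sum>l\<in>UNIV. \<bar>h i $ l\<bar>) * (\<gamma> * pnorm p x ^ d) \<le> b i"
        using x A that by blast
      then show ?thesis
        using inner_U0g_le[OF g xS, of "h i"] by linarith
    qed
    then show ?thesis
      by (simp add: polyS_def inner_add_right)
  qed
  with xS show "x \<in> robust_feasible (polyS r h b) UA (U0g (polyS r h b) \<gamma> p d)"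
    by (simp add: robust_feasible_def)
qed

lemma robust_feasible_polyS_epigraph_iff:
  fixes h :: "nat \<Rightarrow> real^'n"
  assumes "0 \<le> \<gamma>"
  shows "x \<in> robust_feasible (polyS r h b) UA (U0g (polyS r h b) \<gamma> p d) \<longleftrightarrow>
    (\<exists>t. pnorm p x ^ d \<le> t \<and> (\<forall>i<r. h i \<bullet> x \<le> b i) \<and>
      (\<forall>i<r. \<forall>A\<in>UA. h i \<bullet> (A *v x) \<le> b i - (\<Sum>l\<in>UNIV. \<bar>h i $ l\<bar>) * (\<gamma> * t)))"
  unfolding robust_feasible_polyS_iff[OF assms]
proof
  assume "(\<forall>i<r. h i \<bullet> x \<le> b i) \<and>
      (\<forall>i<r. \<forall>A\<in>UA. h i \<bullet> (A *v x) + (\<Sum>l\<in>UNIV. \<bar>h i $ l\<bar>) * (\<gamma> * pnorm p x ^ d) \<le> b i)"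
  then show "\<exists>t. pnorm p x ^ d \<le> t \<and> (\<forall>i<r. h i \<bullet> x \<le> b i) \<and>
      (\<forall>i<r. \<forall>A\<in>UA. h i \<bullet> (A *v x) \<le> b i - (\<Sum>l\<in>UNIV. \<bar>h i $ l\<bar>) * (\<gamma> * t))"
    by (intro exI[of _ "pnorm p x ^ d"]) (simp add: le_diff_eq)
next
  assume "\<exists>t. pnorm p x ^ d \<le> t \<and> (\<forall>i<r. h i \<bullet> x \<le> b i) \<and>
      (\<forall>i<r. \<forall>A\<in>UA. h i \<bullet> (A *v x) \<le> b i - (\<Sum>l\<in>UNIV. \<bar>h i $ l\<bar>) * (\<gamma> * t))"
  then obtain t where t: "pnorm p x ^ d \<le> t" and x: "\<forall>i<r. h i \<bullet> x \<le> b i"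
    and A: "\<forall>i<r. \<forall>A\<in>UA. h i \<bullet> (A *v x) \<le> b i - (\<Sum>l\<in>UNIV. \<bar>h i $ l\<bar>) * (\<gamma> * t)"
    by blast
  have mono: "(\<Sum>l\<in>UNIV. \<bar>h i $ l\<bar>) * (\<gamma> * pnorm p x ^ d) \<le> (\<Sum>l\<in>UNIV. \<bar>h i $ l\<bar>) * (\<gamma> * t)"
    for i
    using assms t by (intro mult_left_mono sum_nonneg) auto
  have "h i \<bullet> (A *v x) + (\<Sum>l\<in>UNIV. \<bar>h i $ l\<bar>) * (\<gamma> * pnorm p x ^ d) \<le> b i"
    if "i < r" "A \<in> UA" for i A
  proof -
    have "h i \<bullet> (A *v x) \<le> b i - (\<Sum>l\<in>UNIV. \<bar>h i $ l\<bar>) * (\<gamma> * t)"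
      using A that by blast
    then show ?thesis using mono[of i] by linarith
  qed
  with x show "(\<forall>i<r. h i \<bullet> x \<le> b i) \<and>
      (\<forall>i<r. \<forall>A\<in>UA. h i \<bullet> (A *v x) + (\<Sum>l\<in>UNIV. \<bar>h i $ l\<bar>) * (\<gamma> * pnorm p x ^ d) \<le> b i)"
    by blast
qed

theorem theorem24:
  fixes r s k d :: nat
    and h :: "nat \<Rightarrow> real^'n" and b :: "nat \<Rightarrow> real"
    and V :: "nat \<Rightarrow> real^'n^'n" and v :: "nat \<Rightarrow> real"
    and p :: ereal and \<gamma> :: real
    and Astar :: "real^'n^'n" and gstar :: "real^'n \<Rightarrow> real^'n"
    and xs ys :: "nat \<Rightarrow> real^'n" and c :: "real^'n"
  assumes hp: "p = \<infinity> \<or> (\<exists>q\<in>\<rat>. p = ereal q \<and> q \<ge> 1)"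
    and hgamma: "\<gamma> > 0"
    and hA: "Astar \<in> U0A s V v"
    and hg: "gstar \<in> U0g (polyS r h b) \<gamma> p d"
    and hy: "\<forall>j<k. ys j = Astar *v xs j + gstar (xs j)"
  shows "socp_reformulable c
           (robust_feasible (polyS r h b)
              (UkA (U0A s V v) \<gamma> p d k xs ys)
              (U0g (polyS r h b) \<gamma> p d))"
proof -
  obtain I :: "(nat + nat \<times> 'n \<times> bool) set" and a c' where I: "finite I"
    and UA: "UkA (U0A s V v) \<gamma> p d k xs ys = {A. \<forall>\<iota>\<in>I. a \<iota> \<bullet> A \<le> c' \<iota>}"
    by (rule UkA_polyhedron)
  have "soc_repr (\<lambda>x z. \<exists>t. pnorm p x ^ d \<le> t \<and> (\<forall>i\<in>{..<r}. h i \<bullet> x \<le> b i) \<and>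
      (\<forall>i\<in>{..<r}. \<forall>A. (\<forall>\<iota>\<in>I. a \<iota> \<bullet> A \<le> c' \<iota>) \<longrightarrow>
        outer_prod (h i) x \<bullet> A \<le> b i - (\<Sum>l\<in>UNIV. \<bar>h i $ l\<bar>) * (\<gamma> * t)))"
    by (intro soc_repr_exists_real soc_repr_conj soc_repr_Ball finite_lessThan
        soc_repr_pnorm_power_le[OF hp] soc_repr_robust_halfspace[OF I] soc_repr_le
        affine_form_intros affine_form_outer_prod)
  then have "soc_repr (\<lambda>x z. x \<in> robust_feasible (polyS r h b) (UkA (U0A s V v) \<gamma> p d k xs ys)
      (U0g (polyS r h b) \<gamma> p d))"
    by (rule soc_repr_cong)
      (simp add: robust_feasible_polyS_epigraph_iff[OF less_imp_le[OF hgamma]] UA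
        inner_matrix_vector_mult Ball_def)
  then show ?thesis
    by (rule socp_reformulable_if_soc_repr)
qed

end
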